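(* Let $B>0$, $C\in\mathbb{R}$ and $\mu\in\mathbb{R}$. On $\ell^2(\mathbb{N}_0)$ with standard orthonormal basis $(e_k)_{k\ge 0}$, let $H$ be the bounded self-adjoint Jacobi operator $$H e_0=\mu e_0+C e_1,\qquad H e_1=C e_0+B e_2,\qquad H e_k=B e_{k-1}+B e_{k+1}\ (k\ge 2),$$ i.e. the tridiagonal matrix with diagonal $(\mu,0,0,\dots)$ and off-diagonal $(C,B,B,\dots)$. Put $\mu_B=\mu/B$ and $C_B=C/B$, and assume the decay condition: if $C\neq B$, $$2\,|1-C_B^2|<\Big|\,|\mu_B|-\sqrt{\mu_B^2+4C_B^2-4}\,\Big|,$$ and if $C=B$, $|\mu_B|<1$. Fix a finite index $j\ge 0$ and let $\psi(t)=e^{-iHt}e_j$. Then $$\lim_{t\to+\infty}\langle n_j(t)\rangle=\lim_{t\to+\infty}|\langle e_j,\psi(t)\rangle|^2=0 .$$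
   Context: $n_j=e_je_j^\dagger$ denotes the projection onto $e_j$, and $\langle n_j(t)\rangle=\langle \psi(t),n_j\psi(t)\rangle$ is its expectation value in the time-evolved state $\psi(t)=e^{-iHt}e_j$ (units with $\hbar=1$). In the decay condition, when $\mu_B^2+4C_B^2-4<0$ the square root is the principal complex square root and the outer $|\cdot|$ is the complex modulus. *)

theory Defs
  imports "HOL-Analysis.Analysis"
begin

text \<open>Vectors of l2(N_0) are represented as sequences nat => complex.
  The Jacobi operator H acts on a sequence by its tridiagonal matrix
  (diagonal (mu,0,0,...), off-diagonal (C,B,B,...)).\<close>

definition jacobiH :: "real \<Rightarrow> real \<Rightarrow> real \<Rightarrow> (nat \<Rightarrow> complex) \<Rightarrow> (nat \<Rightarrow> complex)" where
  "jacobiH B C \<mu> v = (\<lambda>k.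
     if k = 0 then of_real \<mu> * v 0 + of_real C * v 1
     else if k = 1 then of_real C * v 0 + of_real B * v 2
     else of_real B * v (k - 1) + of_real B * v (k + 1))"

definition basis_vec :: "nat \<Rightarrow> nat \<Rightarrow> complex" where
  "basis_vec j = (\<lambda>k. if k = j then 1 else 0)"

text \<open>psi(t) = exp(-iHt) e_j, with the exponential of the bounded operator H
  given by its (norm-convergent) power series: sum_n (-i t)^n / n! H^n e_j.\<close>
definition evolved :: "real \<Rightarrow> real \<Rightarrow> real \<Rightarrow> nat \<Rightarrow> real \<Rightarrow> nat \<Rightarrow> complex" where
  "evolved B C \<mu> j t = (\<lambda>k. \<Sum>n. ((- \<i> * of_real t) ^ n / of_nat (fact n))
                                 * ((jacobiH B C \<mu> ^^ n) (basis_vec j)) k)"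

definition l2_inner :: "(nat \<Rightarrow> complex) \<Rightarrow> (nat \<Rightarrow> complex) \<Rightarrow> complex" where
  "l2_inner u v = (\<Sum>k. cnj (u k) * v k)"

definition proj_nj :: "nat \<Rightarrow> (nat \<Rightarrow> complex) \<Rightarrow> (nat \<Rightarrow> complex)" where
  "proj_nj j v = (\<lambda>k. l2_inner (basis_vec j) v * basis_vec j k)"

end

theory Submission
  imports Defs "HOL-Complex_Analysis.Complex_Analysis"
begin

(* For x = 2B cos s the eigenvalue equation H u = x u has the solution u_k = P_k(x), where the
   P_k are the orthogonal polynomials of H.  Writing z = e^(is), one finds
   P_k = c(z) z^k + c(1/z) z^(-k) for k >= 1, with the Jost function
   c(z) = F(z) / (C_B (z^2 - 1)) and F(z) = z^2 - mu_B z - (C_B^2 - 1).  The decay condition forces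
   both zeros of F into the open unit disc.  Then c(z) / c(1/z) = - F(z) / G(z),
   where G(z) = z^2 F(1/z), is holomorphic on the closed disc, and Cauchy's formula shows that the
   P_k(2B cos s) are orthonormal for the weight w(s) = 1 / (4 pi c(z) c(1/z)) on [0, 2 pi]: the
   spectral measure of H is absolutely continuous, without bound states.  Hence
   <e_j, H^n e_k> = int x^n P_j P_k w ds, and <e_j, psi(t)> = int exp(-i 2Bt cos s) P_j^2 w ds.
   As w carries the factor sin^2 s, the integrand is sin s times a continuous function, and an
   integration by parts (after polynomial approximation) shows that this integral tends to 0. *)

section \<open>Integrals over the unit circle\<close>

lemma sin_neq_0_off_multiples_pi:
  assumes "s \<in> {0..2*pi} - {0, pi, 2*pi}"
  shows "sin s \<noteq> 0"
proof -
  have "\<bar>s - pi\<bar> < pi" "s - pi \<noteq> 0"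
    using assms by auto
  then have "sin (s - pi) \<noteq> 0"
    using sin_zero_pi_iff by blast
  then show ?thesis
    by (simp add: sin_diff)
qed

lemma cis_power2_neq_1:
  assumes "sin s \<noteq> 0"
  shows "cis s ^ 2 \<noteq> 1"
proof
  assume "cis s ^ 2 = 1"
  then have "cis s = 1 \<or> cis s = -1"
    by (simp add: power2_eq_1_iff)
  with assms show False
    by (auto simp: complex_eq_iff)
qed

lemma cis_add_inverse: "cis s + inverse (cis s) = of_real (2 * cos s)"
  by (simp add: complex_eq_iff)

lemma cis_nondegenerate:
  assumes "sin s \<noteq> 0"
  shows "cis s \<noteq> 0" "cis s ^ 2 \<noteq> 1" "inverse (cis s) \<noteq> 0" "inverse (cis s) ^ 2 \<noteq> 1"
  using cis_power2_neq_1[OF assms] cis_power2_neq_1[of "- s"] assms by simp_all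

lemma has_integral_holomorphic_cis_power:
  fixes f :: "complex \<Rightarrow> complex"
  assumes "continuous_on (cball 0 1) f" and "f holomorphic_on ball 0 1"
  shows "((\<lambda>t. f (cis t) * cis t ^ n) has_integral (2 * pi * f 0 * 0 ^ n)) {0..2*pi}"
proof -
  define g where "g u = f u * u ^ n" for u
  have "continuous_on (cball 0 1) g" "g holomorphic_on ball 0 1"
    unfolding g_def using assms by (auto intro!: continuous_intros holomorphic_intros)
  then have "((\<lambda>u. g u / (u - 0)) has_contour_integral (2 * of_real pi * \<i> * g 0)) (circlepath 0 1)"
    by (intro Cauchy_integral_circlepath) auto
  then have "((\<lambda>t. \<i> * g (cis t)) has_integral (\<i> * (2 * pi * g 0))) {0..2*pi}"
    unfolding circlepath_def
    by (subst (asm) has_contour_integral_part_circlepath_iff) (auto simp: field_simps)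
  then have "((\<lambda>t. g (cis t)) has_integral (2 * pi * g 0)) {0..2*pi}"
    by (fastforce dest: has_integral_mult_right[where c = "- \<i>"])
  then show ?thesis
    by (simp add: g_def mult.assoc)
qed

lemma has_integral_cis_power_inverse_power:
  "((\<lambda>t. cis t ^ k * inverse (cis t) ^ l) has_integral (if k = l then 2 * pi else 0)) {0..2*pi}"
proof -
  have cis_power: "((\<lambda>t. cis t ^ n) has_integral (if n = 0 then 2 * pi else 0)) {0..2*pi}" for n
    using has_integral_holomorphic_cis_power[of "\<lambda>_. 1" n] by (cases n) auto
  show ?thesis
  proof (cases "l \<le> k")
    case True
    then have "cis t ^ k * inverse (cis t) ^ l = cis t ^ (k - l)" for t
      by (simp add: power_diff divide_inverse power_inverse del: cis_inverse)
    then show ?thesis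
      using cis_power[of "k - l"] True by simp
  next
    case False
    have "cis t ^ k * inverse (cis t) ^ l = cnj (cis t ^ (l - k))" for t
    proof -
      have "cis t ^ k * inverse (cis t) ^ l = inverse (cis t) ^ (l - k)"
        using False by (simp add: power_diff divide_inverse power_inverse mult.commute del: cis_inverse)
      also have "\<dots> = cnj (cis t ^ (l - k))"
        by (simp add: cis_cnj)
      finally show ?thesis .
    qed
    moreover have "((cnj \<circ> (\<lambda>t. cis t ^ (l - k))) has_integral cnj 0) {0..2*pi}"
      using cis_power[of "l - k"] False by (subst has_integral_cnj) simp
    ultimately show ?thesis
      using False by (simp add: o_def)
  qed
qed

section \<open>Oscillatory integrals\<close>

lemma integral_exp_cos_sin_by_parts:
  fixes q q' :: "real \<Rightarrow> real" and L :: real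
  defines "E \<equiv> \<lambda>t. exp (- \<i> * of_real (L * cos t))" and "c \<equiv> \<i> * of_real L"
  assumes "a \<le> b" and "L \<noteq> 0"
    and deriv: "\<And>x. (q has_real_derivative q' x) (at x)" and cont_q': "continuous_on {a..b} q'"
  shows "integral {a..b} (\<lambda>t. E t * of_real (sin t * q t))
           = (E b * of_real (q b) - E a * of_real (q a)) / c - integral {a..b} (\<lambda>t. E t * of_real (q' t) / c)"
proof -
  define Q where "Q t = E t * of_real (q t) / c" for t
  have "c \<noteq> 0"
    using \<open>L \<noteq> 0\<close> by (simp add: c_def)
  have E_deriv: "(E has_vector_derivative E t * (c * sin t)) (at t within {a..b})" for t
  proof -
    have "((\<lambda>z. exp (- \<i> * of_real L * cos z)) has_field_derivative
           exp (- \<i> * of_real L * cos (of_real t)) * (c * sin (of_real t))) (at (of_real t))"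
      unfolding c_def by (auto intro!: derivative_eq_intros)
    from has_vector_derivative_real_field[OF this] show ?thesis
      by (simp add: E_def cos_of_real sin_of_real mult.assoc)
  qed
  have "(Q has_vector_derivative E t * of_real (sin t * q t) + E t * of_real (q' t) / c) (at t within {a..b})" for t
  proof -
    have "((\<lambda>t. of_real (q t)) has_vector_derivative of_real (q' t)) (at t within {a..b})"
      using deriv[of t] by (intro has_vector_derivative_of_real) (auto intro: has_field_derivative_at_within)
    from has_vector_derivative_divide[OF has_vector_derivative_mult[OF E_deriv this], of c]
    show ?thesis
      using \<open>c \<noteq> 0\<close> unfolding Q_def by (simp add: field_simps)
  qed
  then have ftc: "((\<lambda>t. E t * of_real (sin t * q t) + E t * of_real (q' t) / c) has_integral (Q b - Q a)) {a..b}"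
    by (intro fundamental_theorem_of_calculus \<open>a \<le> b\<close>)
  have "continuous_on {a..b} q"
    using deriv by (meson DERIV_isCont continuous_at_imp_continuous_on)
  then have "(\<lambda>t. E t * of_real (sin t * q t)) integrable_on {a..b}"
    unfolding E_def by (intro integrable_continuous_interval continuous_intros)
  moreover have "(\<lambda>t. E t * of_real (q' t) / c) integrable_on {a..b}"
    unfolding E_def using cont_q' \<open>c \<noteq> 0\<close> by (intro integrable_continuous_interval continuous_intros) auto
  ultimately have "integral {a..b} (\<lambda>t. E t * of_real (sin t * q t))
                     = (Q b - Q a) - integral {a..b} (\<lambda>t. E t * of_real (q' t) / c)"
    unfolding eq_diff_eq by (simp only: integral_add[symmetric] integral_unique[OF ftc] diff_add_cancel)
  then show ?thesis
    by (simp add: Q_def diff_divide_distrib)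
qed

lemma norm_integral_exp_cos_sin_le:
  fixes q q' :: "real \<Rightarrow> real"
  assumes "a \<le> b" and "L > 0"
    and deriv: "\<And>x. (q has_real_derivative q' x) (at x)" and cont_q': "continuous_on {a..b} q'"
    and M: "\<And>x. x \<in> {a..b} \<Longrightarrow> \<bar>q x\<bar> \<le> M" and M': "\<And>x. x \<in> {a..b} \<Longrightarrow> \<bar>q' x\<bar> \<le> M'"
  shows "norm (integral {a..b} (\<lambda>t. exp (- \<i> * of_real (L * cos t)) * of_real (sin t * q t)))
           \<le> (2 * M + M' * (b - a)) / L"
proof -
  define E where "E = (\<lambda>t. exp (- \<i> * of_real (L * cos t)))"
  define c where "c = \<i> * complex_of_real L"
  define R where "R = integral {a..b} (\<lambda>t. E t * of_real (q' t) / c)"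
  have parts: "integral {a..b} (\<lambda>t. E t * of_real (sin t * q t)) = E b * q b / c - E a * q a / c - R"
    unfolding E_def c_def R_def using \<open>a \<le> b\<close> \<open>L > 0\<close> deriv cont_q'
    by (subst integral_exp_cos_sin_by_parts) (auto simp: diff_divide_distrib)
  have norm_E: "norm (E t) = 1" for t
    by (simp add: E_def)
  have "norm (E t * q t / c) \<le> M / L" if "t \<in> {a..b}" for t
    using M[OF that] \<open>L > 0\<close> norm_E by (simp add: c_def norm_mult norm_divide divide_right_mono)
  then have "norm (E b * q b / c) \<le> M / L" "norm (E a * q a / c) \<le> M / L"
    using \<open>a \<le> b\<close> by auto
  moreover have "norm R \<le> M' / L * (b - a)"
    unfolding R_def
  proof (rule integral_bound[OF \<open>a \<le> b\<close>])
    show "continuous_on {a..b} (\<lambda>t. E t * of_real (q' t) / c)"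
      unfolding E_def using cont_q' \<open>L > 0\<close> by (intro continuous_intros) (auto simp: c_def)
    show "norm (E t * of_real (q' t) / c) \<le> M' / L" if "t \<in> {a..b}" for t
      using M'[OF that] \<open>L > 0\<close> norm_E by (simp add: c_def norm_mult norm_divide divide_right_mono)
  qed
  ultimately have "norm (integral {a..b} (\<lambda>t. E t * of_real (sin t * q t))) \<le> 2 * (M / L) + M' / L * (b - a)"
    unfolding parts
    using norm_triangle_ineq4[of "E b * q b / c - E a * q a / c" R] norm_triangle_ineq4[of "E b * q b / c" "E a * q a / c"]
    by linarith
  then show ?thesis
    using \<open>L > 0\<close> by (simp add: E_def add_divide_distrib)
qed

lemma integral_exp_cos_sin_polynomial_tendsto_0:
  fixes q :: "real \<Rightarrow> real"
  assumes "a \<le> b" and "polynomial_function q"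
  shows "((\<lambda>L. integral {a..b} (\<lambda>t. exp (- \<i> * of_real (L * cos t)) * of_real (sin t * q t))) \<longlongrightarrow> 0) at_top"
proof -
  obtain q' where "polynomial_function q'" and deriv: "\<And>x. (q has_real_derivative q' x) (at x)"
    using has_vector_derivative_polynomial_function[OF assms(2)]
    unfolding has_real_derivative_iff_has_vector_derivative by blast
  have cont: "continuous_on {a..b} q" "continuous_on {a..b} q'"
    using assms(2) \<open>polynomial_function q'\<close> by (auto intro: continuous_on_polymonial_function)
  obtain M where M: "\<forall>x\<in>{a..b}. \<bar>q x\<bar> \<le> M"
    using compact_imp_bounded[OF compact_continuous_image[OF cont(1) compact_Icc]]
    by (auto simp: bounded_iff)
  obtain M' where M': "\<forall>x\<in>{a..b}. \<bar>q' x\<bar> \<le> M'"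
    using compact_imp_bounded[OF compact_continuous_image[OF cont(2) compact_Icc]]
    by (auto simp: bounded_iff)
  have "((\<lambda>L. (2 * M + M' * (b - a)) / L) \<longlongrightarrow> 0) at_top"
    by (intro tendsto_divide_0[OF tendsto_const] filterlim_at_top_imp_at_infinity[OF filterlim_ident])
  moreover have "\<forall>\<^sub>F L in at_top.
      norm (integral {a..b} (\<lambda>t. exp (- \<i> * of_real (L * cos t)) * of_real (sin t * q t))) \<le> (2 * M + M' * (b - a)) / L"
    using eventually_gt_at_top[of 0]
    by eventually_elim (rule norm_integral_exp_cos_sin_le[OF \<open>a \<le> b\<close> _ deriv cont(2) M[rule_format] M'[rule_format]]; simp)
  ultimately show ?thesis
    by (rule Lim_null_comparison[rotated])
qed

lemma norm_integral_exp_cos_sin_diff_le: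
  fixes r q :: "real \<Rightarrow> real"
  assumes "a \<le> b" and cont: "continuous_on {a..b} r" "continuous_on {a..b} q"
    and close: "\<And>x. x \<in> {a..b} \<Longrightarrow> \<bar>r x - q x\<bar> \<le> \<delta>"
  shows "norm (integral {a..b} (\<lambda>t. exp (- \<i> * of_real (L * cos t)) * of_real (sin t * r t))
             - integral {a..b} (\<lambda>t. exp (- \<i> * of_real (L * cos t)) * of_real (sin t * q t)))
           \<le> \<delta> * (b - a)"
proof -
  have "integral {a..b} (\<lambda>t. exp (- \<i> * of_real (L * cos t)) * of_real (sin t * r t))
          - integral {a..b} (\<lambda>t. exp (- \<i> * of_real (L * cos t)) * of_real (sin t * q t))
        = integral {a..b} (\<lambda>t. exp (- \<i> * of_real (L * cos t)) * of_real (sin t * (r t - q t)))"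
    using cont by (subst integral_diff[symmetric])
      (auto intro!: integral_cong integrable_continuous_interval continuous_intros simp: algebra_simps)
  also have "norm \<dots> \<le> \<delta> * (b - a)"
  proof (rule integral_bound[OF \<open>a \<le> b\<close>])
    show "continuous_on {a..b} (\<lambda>t. exp (- \<i> * of_real (L * cos t)) * of_real (sin t * (r t - q t)))"
      using cont by (intro continuous_intros)
    fix t
    assume "t \<in> {a..b}"
    then have "\<bar>sin t\<bar> * \<bar>r t - q t\<bar> \<le> 1 * \<delta>"
      using close by (intro mult_mono) (auto simp: abs_sin_le_one order_trans[OF abs_ge_zero])
    then show "norm (exp (- \<i> * of_real (L * cos t)) * of_real (sin t * (r t - q t))) \<le> \<delta>"
      by (simp add: norm_mult abs_mult del: of_real_mult of_real_diff)
  qed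
  finally show ?thesis .
qed

text \<open>A Riemann-Lebesgue lemma for the phase \<open>L cos t\<close>; the factor \<open>sin t\<close> kills its stationary points.\<close>

lemma integral_exp_cos_sin_tendsto_0:
  fixes r :: "real \<Rightarrow> real"
  assumes "a \<le> b" and cont_r: "continuous_on {a..b} r"
  shows "((\<lambda>L. integral {a..b} (\<lambda>t. exp (- \<i> * of_real (L * cos t)) * of_real (sin t * r t))) \<longlongrightarrow> 0) at_top"
proof (rule tendstoI)
  fix \<epsilon> :: real
  assume "\<epsilon> > 0"
  define \<delta> where "\<delta> = \<epsilon> / (2 * (b - a + 1))"
  have "\<delta> > 0" and small: "\<delta> * (b - a) < \<epsilon> / 2"
    using \<open>\<epsilon> > 0\<close> \<open>a \<le> b\<close> by (simp_all add: \<delta>_def field_simps)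
  then obtain q where q: "polynomial_function q" and approx: "\<forall>x\<in>{a..b}. norm (r x - q x) < \<delta>"
    using Stone_Weierstrass_polynomial_function[OF compact_Icc cont_r] by blast
  define I where "I f L = integral {a..b} (\<lambda>t. exp (- \<i> * of_real (L * cos t)) * of_real (sin t * f t))" for f L
  have close: "norm (I r L - I q L) \<le> \<delta> * (b - a)" for L
    unfolding I_def using approx q cont_r
    by (intro norm_integral_exp_cos_sin_diff_le \<open>a \<le> b\<close>) (auto intro: continuous_on_polymonial_function less_imp_le)
  have "\<forall>\<^sub>F L in at_top. norm (I q L) < \<epsilon> / 2"
    using tendstoD[OF integral_exp_cos_sin_polynomial_tendsto_0[OF \<open>a \<le> b\<close> q], of "\<epsilon> / 2"] \<open>\<epsilon> > 0\<close>
    by (simp add: I_def)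
  then have "\<forall>\<^sub>F L in at_top. norm (I r L) < \<epsilon>"
  proof (rule eventually_mono)
    show "norm (I r L) < \<epsilon>" if "norm (I q L) < \<epsilon> / 2" for L
      using that close[of L] small norm_triangle_sub[of "I r L" "I q L"] by linarith
  qed
  then show "\<forall>\<^sub>F L in at_top. dist (I r L) 0 < \<epsilon>"
    by simp
qed

lemma sums_integral_exp:
  fixes f g :: "real \<Rightarrow> complex"
  assumes "continuous_on {a..b} f" and "continuous_on {a..b} g"
  shows "(\<lambda>n. integral {a..b} (\<lambda>s. f s ^ n / fact n * g s)) sums integral {a..b} (\<lambda>s. exp (f s) * g s)"
proof -
  define S where "S N s = (\<Sum>n<N. f s ^ n / fact n) * g s" for N s
  have int_S: "S N integrable_on {a..b}" for N
    unfolding S_def using assms by (intro integrable_continuous_interval continuous_intros) auto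
  have "(\<lambda>s. f s ^ n / fact n * g s) integrable_on {a..b}" for n
    using assms by (intro integrable_continuous_interval continuous_intros) auto
  then have "(\<Sum>n<N. integral {a..b} (\<lambda>s. f s ^ n / fact n * g s)) = integral {a..b} (S N)" for N
    unfolding S_def sum_distrib_right by (subst integral_sum) auto
  moreover have "(\<lambda>N. integral {a..b} (S N)) \<longlonglongrightarrow> integral {a..b} (\<lambda>s. exp (f s) * g s)"
  proof (rule dominated_convergence(2)[OF int_S])
    show "(\<lambda>s. exp (norm (f s)) * norm (g s)) integrable_on {a..b}"
      using assms by (intro integrable_continuous_interval continuous_intros)
    show "norm (S N s) \<le> exp (norm (f s)) * norm (g s)" for N s
    proof -
      have "norm (\<Sum>n<N. f s ^ n / fact n) \<le> (\<Sum>n<N. norm (f s) ^ n / fact n)"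
        by (rule order_trans[OF norm_sum]) (simp add: norm_divide norm_power)
      also have "\<dots> \<le> exp (norm (f s))"
        using sum_le_suminf[OF summable_exp, of "{..<N}" "norm (f s)"]
        by (simp add: exp_def divide_inverse mult.commute)
      finally show ?thesis
        unfolding S_def norm_mult by (rule mult_right_mono) simp
    qed
    show "(\<lambda>N. S N s) \<longlonglongrightarrow> exp (f s) * g s" for s
      using exp_converges[of "f s"] unfolding S_def sums_def
      by (intro tendsto_mult_right) (simp add: scaleR_conv_of_real divide_inverse mult.commute)
  qed
  ultimately show ?thesis
    unfolding sums_def by simp
qed

section \<open>Generalised eigenvectors of the Jacobi operator\<close>

lemma jacobiH_mult: "jacobiH B C \<mu> (\<lambda>k. c * v k) = (\<lambda>k. c * jacobiH B C \<mu> v k)"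
  by (simp add: jacobiH_def fun_eq_iff algebra_simps)

lemma jacobiH_integral:
  assumes "\<And>k. f k integrable_on S"
  shows "jacobiH B C \<mu> (\<lambda>k. integral S (f k)) k = integral S (\<lambda>s. jacobiH B C \<mu> (\<lambda>k. f k s) k)"
  using assms by (simp add: jacobiH_def integral_add integrable_on_cmult_left)

fun orthpoly :: "real \<Rightarrow> real \<Rightarrow> real \<Rightarrow> nat \<Rightarrow> real \<Rightarrow> real" where
  "orthpoly B C \<mu> 0 x = 1"
| "orthpoly B C \<mu> (Suc 0) x = (x - \<mu>) / C"
| "orthpoly B C \<mu> (Suc (Suc 0)) x = (x * orthpoly B C \<mu> (Suc 0) x - C) / B"
| "orthpoly B C \<mu> (Suc (Suc (Suc k))) x =
     (x * orthpoly B C \<mu> (Suc (Suc k)) x - B * orthpoly B C \<mu> (Suc k) x) / B"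

lemma jacobiH_orthpoly:
  fixes B C \<mu> x :: real
  assumes "B \<noteq> 0" and "C \<noteq> 0"
  shows "jacobiH B C \<mu> (\<lambda>k. of_real (orthpoly B C \<mu> k x)) k = of_real (x * orthpoly B C \<mu> k x)"
proof -
  let ?P = "orthpoly B C \<mu>"
  have "jacobiH B C \<mu> (\<lambda>k. of_real (?P k x)) k = of_real
          (if k = 0 then \<mu> * ?P 0 x + C * ?P 1 x
           else if k = 1 then C * ?P 0 x + B * ?P 2 x
           else B * ?P (k - 1) x + B * ?P (k + 1) x)"
    by (simp add: jacobiH_def)
  also have "\<dots> = of_real (x * ?P k x)"
  proof -
    consider "k = 0" | "k = 1" | k' where "k = Suc (Suc k')"
      by (metis One_nat_def not0_implies_Suc)
    then show ?thesis
      by cases (use assms in \<open>simp_all add: numeral_2_eq_2 field_simps\<close>)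
  qed
  finally show ?thesis .
qed

lemma orthpoly_continuous_on:
  fixes B C \<mu> :: real
  assumes "B \<noteq> 0" and "C \<noteq> 0"
  shows "continuous_on S (orthpoly B C \<mu> k)"
proof (induction k rule: induct_nat_012)
  case 0
  show ?case
    by (simp add: continuous_on_const)
next
  case 1
  have "continuous_on S (\<lambda>x. (x - \<mu>) / C)"
    using assms by (intro continuous_intros) auto
  then show ?case
    by simp
next
  case (ge2 n)
  show ?case
  proof (cases n)
    case 0
    have "continuous_on S (\<lambda>x. (x * orthpoly B C \<mu> (Suc 0) x - C) / B)"
      using ge2 0 assms by (intro continuous_intros) auto
    then show ?thesis
      using 0 by simp
  next
    case (Suc n')
    have "continuous_on S (\<lambda>x. (x * orthpoly B C \<mu> (Suc (Suc n')) x - B * orthpoly B C \<mu> (Suc n') x) / B)"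
      using ge2 Suc assms by (intro continuous_intros) auto
    then show ?thesis
      using Suc by simp
  qed
qed

section \<open>The decay condition\<close>

(* With q = csqrt (m^2 + 4a) and after replacing u by -u if m < 0, the roots are (|m| +- q) / 2.
   As Re q >= 0, (|m| + q) / 2 is the larger one; the product of the two moduli is |a|, and the
   hypothesis bounds the smaller one from below by |a|, so the larger one is below 1. *)

lemma quadratic_root_norm_less_1:
  fixes m a :: real and u :: complex
  assumes small: "2 * \<bar>a\<bar> < cmod (of_real \<bar>m\<bar> - csqrt (of_real (m^2 + 4 * a)))"
    and root: "u^2 - of_real m * u - of_real a = 0"
  shows "cmod u < 1"
proof -
  define q where "q = csqrt (of_real (m^2 + 4 * a))"
  define M :: complex where "M = of_real \<bar>m\<bar>"
  define v where "v = (if m \<ge> 0 then u else - u)"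
  have q2: "q^2 = of_real (m^2 + 4 * a)" and M2: "M^2 = of_real (m^2)"
    by (simp_all add: q_def M_def flip: of_real_power)
  have "(2 * v - (M + q)) * (2 * v - (M - q)) = 4 * (v^2 - M * v - of_real a)"
    using q2 M2 by (simp add: algebra_simps power2_eq_square)
  also have "v^2 - M * v - of_real a = 0"
    using root by (auto simp: v_def M_def)
  finally have v_cases: "2 * v = M + q \<or> 2 * v = M - q"
    by (simp only: mult_eq_0_iff right_minus_eq mult_zero_right)
  have "cmod (M + q)^2 - cmod (M - q)^2 = 4 * \<bar>m\<bar> * Re q"
    unfolding cmod_power2 by (simp add: M_def power2_eq_square algebra_simps)
  moreover have "0 \<le> Re q"
    unfolding q_def by (rule Re_csqrt)
  ultimately have "cmod (M - q)^2 \<le> cmod (M + q)^2"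
    by (simp add: algebra_simps)
  then have le: "cmod (M - q) \<le> cmod (M + q)"
    by (rule power2_le_imp_le) simp
  have "(M - q) * (M + q) = M^2 - q^2"
    by (simp add: algebra_simps power2_eq_square)
  also have "\<dots> = - 4 * of_real a"
    using q2 M2 by simp
  finally have "cmod (M - q) * cmod (M + q) = 4 * \<bar>a\<bar>"
    by (metis norm_mult norm_minus_cancel norm_numeral norm_of_real mult_minus_left)
  moreover have "2 * \<bar>a\<bar> < cmod (M - q)"
    using small by (simp add: M_def q_def)
  ultimately have "cmod (M - q) * cmod (M + q) < cmod (M - q) * 2" "0 < cmod (M - q)"
    by linarith+
  then have "cmod (M + q) < 2"
    by simp
  moreover have "cmod (2 * v) \<le> cmod (M + q)"
    using v_cases le by (metis order.refl)
  ultimately show ?thesis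
    by (cases "m \<ge> 0") (simp_all add: v_def norm_mult)
qed

lemma decay_condition_roots_in_disc:
  fixes B C \<mu> :: real and u :: complex
  assumes "B > 0"
    and "C \<noteq> B \<Longrightarrow> 2 * \<bar>1 - (C / B)\<^sup>2\<bar> <
           cmod (complex_of_real \<bar>\<mu> / B\<bar>
                 - csqrt (complex_of_real ((\<mu> / B)\<^sup>2 + 4 * (C / B)\<^sup>2 - 4)))"
    and "C = B \<Longrightarrow> \<bar>\<mu> / B\<bar> < 1"
    and root: "u^2 - of_real (\<mu> / B) * u - of_real ((C / B)^2 - 1) = 0"
  shows "cmod u < 1"
proof (cases "C = B")
  case True
  then have "u * (u - of_real (\<mu> / B)) = 0"
    using root \<open>B > 0\<close> by (simp add: power2_eq_square algebra_simps)
  then show ?thesis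
    using assms(3)[OF True] by (auto simp: norm_divide)
next
  case False
  have "(\<mu> / B)\<^sup>2 + 4 * (C / B)\<^sup>2 - 4 = (\<mu> / B)^2 + 4 * ((C / B)^2 - 1)"
    by simp
  with assms(2)[OF False] show ?thesis
    by (intro quadratic_root_norm_less_1[OF _ root]) (simp add: abs_minus_commute)
qed

section \<open>Spectral representation\<close>

locale jacobi_decay =
  fixes B C \<mu> :: real
  assumes B_pos: "B > 0"
    and roots_in_disc: "\<And>u. u^2 - of_real (\<mu> / B) * u - of_real ((C / B)^2 - 1) = 0 \<Longrightarrow> cmod u < 1"
begin

definition m :: real where "m = \<mu> / B"
definition cb :: real where "cb = C / B"
definition a :: real where "a = cb^2 - 1"

definition F :: "complex \<Rightarrow> complex" where "F z = z^2 - of_real m * z - of_real a"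
definition G :: "complex \<Rightarrow> complex" where "G z = 1 - of_real m * z - of_real a * z^2"
definition jost :: "complex \<Rightarrow> complex" where "jost z = F z / (of_real cb * (z^2 - 1))"
definition jost_ratio :: "complex \<Rightarrow> complex" where "jost_ratio z = - F z / G z"

lemma F_root_norm_less_1: "F u = 0 \<Longrightarrow> cmod u < 1"
  using roots_in_disc unfolding F_def m_def a_def cb_def by blast

lemma G_eq_F_inverse: "z \<noteq> 0 \<Longrightarrow> G z = z^2 * F (inverse z)"
  by (simp add: G_def F_def field_simps power2_eq_square)

lemma G_nonzero:
  assumes "cmod z \<le> 1"
  shows "G z \<noteq> 0"
proof
  assume "G z = 0"
  moreover have "G 0 = 1"
    by (simp add: G_def)
  ultimately have "z \<noteq> 0"
    by auto
  with \<open>G z = 0\<close> have "F (inverse z) = 0"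
    by (simp add: G_eq_F_inverse)
  then have "1 < cmod z"
    using F_root_norm_less_1[of "inverse z"] \<open>z \<noteq> 0\<close> by (simp add: norm_inverse inverse_less_1_iff)
  with assms show False
    by simp
qed

text \<open>The decay condition excludes \<open>C = 0\<close>: then \<open>G = F\<close> would vanish inside the disc.\<close>

lemma cb_nonzero: "cb \<noteq> 0"
proof
  assume "cb = 0"
  then have "G = F"
    by (auto simp: F_def G_def a_def fun_eq_iff algebra_simps)
  define q where "q = csqrt (of_real (m^2 + 4 * a))"
  define r where "r = (of_real m + q) / 2"
  have "4 * F r = q^2 - of_real (m^2 + 4 * a)"
    unfolding F_def r_def by (simp add: field_simps power2_eq_square)
  then have "F r = 0"
    by (simp add: q_def)
  then show False
    using G_nonzero[of r] F_root_norm_less_1[of r] \<open>G = F\<close> by auto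
qed

lemma F_cis_nonzero: "F (cis t) \<noteq> 0"
  using F_root_norm_less_1[of "cis t"] by auto

lemma F_cnj: "F (cnj z) = cnj (F z)"
  by (simp add: F_def)

lemma jost_ratio_cnj: "jost_ratio (cnj z) = cnj (jost_ratio z)"
  by (simp add: jost_ratio_def F_def G_def)

lemma jost_ratio_0: "jost_ratio 0 = of_real a"
  by (simp add: jost_ratio_def F_def G_def)

context
  fixes z :: complex
  assumes z: "z \<noteq> 0" "z^2 \<noteq> 1"
begin

lemma jost_inverse: "jost (inverse z) = - G z / (of_real cb * (z^2 - 1))"
proof -
  have "inverse z ^ 2 - 1 = - (z^2 - 1) / z^2"
    using z by (simp add: field_simps power2_eq_square)
  then show ?thesis
    using z cb_nonzero G_eq_F_inverse[of z] by (simp add: jost_def field_simps)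
qed

lemma jost_add_jost_inverse: "jost z + jost (inverse z) = of_real cb"
proof -
  have "jost z + jost (inverse z) = (F z - G z) / (of_real cb * (z^2 - 1))"
    unfolding jost_inverse jost_def[of z] by (simp add: diff_divide_distrib)
  also have "F z - G z = of_real cb * (of_real cb * (z^2 - 1))"
    by (simp add: F_def G_def a_def algebra_simps power2_eq_square)
  finally show ?thesis
    using z cb_nonzero by simp
qed

lemma jost_expansion_1: "jost z * z + jost (inverse z) * inverse z = (z + inverse z - of_real m) / of_real cb"
proof -
  have "z^2 - 1 \<noteq> 0"
    using z by simp
  have combine: "X / D * z + (- Y / D) * inverse z = (z^2 * X - Y) / (D * z)" if "D \<noteq> 0" for X Y D
    using that z by (simp add: field_simps power2_eq_square)
  have "jost z * z + jost (inverse z) * inverse z = (z^2 * F z - G z) / (of_real cb * (z^2 - 1) * z)"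
    unfolding jost_inverse jost_def[of z] using \<open>z^2 - 1 \<noteq> 0\<close> cb_nonzero by (intro combine) simp
  also have "z^2 * F z - G z = (z^2 - 1) * (z^2 + 1 - of_real m * z)"
    by (simp add: F_def G_def power2_eq_square algebra_simps)
  also have "(z^2 - 1) * (z^2 + 1 - of_real m * z) / (of_real cb * (z^2 - 1) * z) =
      (z + inverse z - of_real m) / of_real cb"
    using z \<open>z^2 - 1 \<noteq> 0\<close> cb_nonzero by (simp add: field_simps power2_eq_square)
  finally show ?thesis .
qed

lemma jost_divide_jost_inverse: "G z \<noteq> 0 \<Longrightarrow> jost z / jost (inverse z) = jost_ratio z"
  unfolding jost_inverse jost_def[of z] jost_ratio_def using z cb_nonzero by (simp add: field_simps)

end

definition eigvec :: "nat \<Rightarrow> real \<Rightarrow> real" where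
  "eigvec k s = orthpoly B C \<mu> k (2 * B * cos s)"

definition wave :: "nat \<Rightarrow> real \<Rightarrow> complex" where
  "wave k s = jost (cis s) * cis s ^ k + jost (inverse (cis s)) * inverse (cis s) ^ k"

definition weight :: "real \<Rightarrow> real" where
  "weight s = cb^2 * (sin s)^2 / (pi * (cmod (F (cis s)))^2)"

lemma B_nonzero: "B \<noteq> 0" and C_nonzero: "C \<noteq> 0"
  using B_pos cb_nonzero by (auto simp: cb_def)

lemma eigvec_continuous_on: "continuous_on S (eigvec k)"
  unfolding eigvec_def[abs_def]
  by (rule continuous_on_compose2[OF orthpoly_continuous_on[OF B_nonzero C_nonzero, of UNIV]])
     (auto intro!: continuous_intros)

lemma weight_continuous_on: "continuous_on S weight"
  unfolding weight_def[abs_def] F_def using F_cis_nonzero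
  by (intro continuous_intros) (auto simp: F_def)

lemma wave_Suc_Suc: "wave (Suc (Suc k)) s = of_real (2 * cos s) * wave (Suc k) s - wave k s"
proof -
  define z where "z = cis s"
  define y where "y = inverse z"
  have "z * y = 1"
    by (simp add: z_def y_def del: cis_inverse)
  then have zy: "y * z ^ Suc k = z ^ k" "z * y ^ Suc k = y ^ k"
    by (simp_all add: mult.left_commute[of y] mult.left_commute[of z] mult.commute[of y])
  have "(z + y) * (jost z * z ^ Suc k + jost y * y ^ Suc k) =
      jost z * (z * z ^ Suc k) + jost z * (y * z ^ Suc k) + jost y * (z * y ^ Suc k) + jost y * (y * y ^ Suc k)"
    by (simp add: algebra_simps)
  then show ?thesis
    unfolding wave_def cis_add_inverse[symmetric] z_def[symmetric] y_def[symmetric] zy by simp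
qed

context
  fixes s :: real
  assumes sin_s: "sin s \<noteq> 0"
begin

lemma eigvec_Suc_eq_wave: "of_real (eigvec (Suc k) s) = wave (Suc k) s"
proof -
  have 1: "of_real (eigvec 1 s) = wave 1 s"
  proof -
    have "eigvec 1 s = (2 * cos s - m) / cb"
      using B_nonzero C_nonzero by (simp add: eigvec_def m_def cb_def field_simps)
    then show ?thesis
      using jost_expansion_1[OF cis_nondegenerate(1,2)[OF sin_s], unfolded cis_add_inverse] by (simp add: wave_def)
  qed
  have 2: "of_real (eigvec 2 s) = wave 2 s"
  proof -
    have "eigvec 2 s = 2 * cos s * eigvec 1 s - cb"
      using B_nonzero by (simp add: eigvec_def cb_def numeral_2_eq_2 field_simps)
    then show ?thesis
      using 1 wave_Suc_Suc[of 0 s] jost_add_jost_inverse[OF cis_nondegenerate(1,2)[OF sin_s]]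
      by (simp add: numeral_2_eq_2 wave_def)
  qed
  show ?thesis
  proof (induction k rule: induct_nat_012)
    case (ge2 n)
    have "eigvec (Suc (Suc (Suc n))) s = 2 * cos s * eigvec (Suc (Suc n)) s - eigvec (Suc n) s"
      using B_nonzero by (simp add: eigvec_def field_simps)
    then show ?case
      using ge2 wave_Suc_Suc[of "Suc n" s] by simp
  qed (use 1 2 in \<open>simp_all add: numeral_2_eq_2\<close>)
qed

lemma eigvec_eq_wave: "of_real (eigvec k s) = of_real (if k = 0 then 1 / cb else 1) * wave k s"
proof (cases k)
  case 0
  then show ?thesis
    using jost_add_jost_inverse[OF cis_nondegenerate(1,2)[OF sin_s]] cb_nonzero by (simp add: eigvec_def wave_def)
qed (simp add: eigvec_Suc_eq_wave)

lemma weight_eq: "of_real (weight s) = 1 / (4 * pi * jost (cis s) * jost (inverse (cis s)))"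
proof -
  define z where "z = cis s"
  define y where "y = inverse z"
  have "z * y = 1"
    by (simp add: z_def y_def del: cis_inverse)
  have "F z \<noteq> 0" "F y \<noteq> 0" and Fy: "F y = cnj (F z)"
    using F_cis_nonzero by (simp_all add: z_def y_def cis_cnj flip: F_cnj)
  have "(z^2 - 1) * (y^2 - 1) = (z * y)^2 - z^2 - y^2 + 1"
    by (simp add: algebra_simps power2_eq_square)
  also have "\<dots> = - ((z - y)^2)"
    using \<open>z * y = 1\<close> by (simp add: algebra_simps power2_eq_square)
  also have "z - y = 2 * \<i> * of_real (sin s)"
    by (simp add: z_def y_def complex_eq_iff)
  finally have sin2: "of_real (sin s)^2 = (z^2 - 1) * (y^2 - 1) / 4"
    by (simp add: power_mult_distrib)
  have "of_real ((cmod (F z))^2) = F z * F y"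
    unfolding Fy complex_norm_square ..
  then have "of_real (weight s) = of_real cb ^ 2 * of_real (sin s)^2 / (of_real pi * (F z * F y))"
    by (simp add: weight_def z_def)
  also have "\<dots> = of_real cb ^ 2 * ((z^2 - 1) * (y^2 - 1) / 4) / (of_real pi * (F z * F y))"
    unfolding sin2 ..
  also have "\<dots> = 1 / (4 * pi * jost z * jost y)"
    using cis_nondegenerate[OF sin_s] cb_nonzero \<open>F z \<noteq> 0\<close> \<open>F y \<noteq> 0\<close>
    by (simp add: jost_def z_def y_def field_simps power2_eq_square)
  finally show ?thesis
    by (simp add: z_def y_def)
qed

lemma wave_product_weight:
  "wave k s * wave l s * of_real (weight s) =
    (jost_ratio (cis s) * cis s ^ (k + l) + jost_ratio (inverse (cis s)) * inverse (cis s) ^ (k + l)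
      + cis s ^ k * inverse (cis s) ^ l + cis s ^ l * inverse (cis s) ^ k) / (4 * pi)"
proof -
  define z where "z = cis s"
  define y where "y = inverse z"
  have "G z \<noteq> 0" "G y \<noteq> 0"
    by (simp_all add: G_nonzero z_def y_def norm_inverse)
  moreover have "F z \<noteq> 0" "F y \<noteq> 0"
    using F_cis_nonzero by (simp_all add: z_def y_def cis_cnj flip: F_cnj)
  ultimately have "jost z \<noteq> 0" "jost y \<noteq> 0" "jost z / jost y = jost_ratio z" "jost y / jost z = jost_ratio y"
    using cis_nondegenerate[OF sin_s] cb_nonzero jost_divide_jost_inverse[of z] jost_divide_jost_inverse[of y]
    by (auto simp: jost_def y_def z_def)
  moreover have "(jost z * z^k + jost y * y^k) * (jost z * z^l + jost y * y^l) / (4 * pi * jost z * jost y)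
      = ((jost z / jost y) * z^(k + l) + (jost y / jost z) * y^(k + l) + z^k * y^l + z^l * y^k) / (4 * pi)"
    if "jost z \<noteq> 0" "jost y \<noteq> 0"
    using that by (simp add: field_simps power_add)
  ultimately show ?thesis
    using weight_eq unfolding wave_def z_def[symmetric] y_def[symmetric] by simp
qed


lemma eigvec_product_weight:
  "complex_of_real (eigvec k s * eigvec l s * weight s) =
     of_real ((if k = 0 then 1 / cb else 1) * (if l = 0 then 1 / cb else 1)) *
     ((jost_ratio (cis s) * cis s ^ (k + l) + jost_ratio (inverse (cis s)) * inverse (cis s) ^ (k + l)
       + cis s ^ k * inverse (cis s) ^ l + cis s ^ l * inverse (cis s) ^ k) / (4 * pi))"
proof -
  have "complex_of_real (eigvec k s * eigvec l s * weight s) =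
      of_real ((if k = 0 then 1 / cb else 1) * (if l = 0 then 1 / cb else 1)) *
      (wave k s * wave l s * of_real (weight s))"
    using eigvec_eq_wave[of k] eigvec_eq_wave[of l] by (simp add: mult_ac)
  then show ?thesis
    unfolding wave_product_weight .
qed
end


lemma jost_ratio_continuous_on: "continuous_on (cball 0 1) jost_ratio"
proof -
  have "continuous_on (cball 0 1) F" "continuous_on (cball 0 1) G"
    unfolding F_def[abs_def] G_def[abs_def] by (intro continuous_intros)+
  then show ?thesis
    unfolding jost_ratio_def[abs_def] using G_nonzero by (intro continuous_intros) auto
qed

lemma jost_ratio_holomorphic_on: "jost_ratio holomorphic_on ball 0 1"
proof -
  have "F holomorphic_on ball 0 1" "G holomorphic_on ball 0 1"
    unfolding F_def[abs_def] G_def[abs_def] by (intro holomorphic_intros)+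
  then show ?thesis
    unfolding jost_ratio_def[abs_def] using G_nonzero by (intro holomorphic_intros) auto
qed

lemma has_integral_jost_ratio_cis_power:
  "((\<lambda>s. jost_ratio (cis s) * cis s ^ n) has_integral of_real (2 * pi * a * 0 ^ n)) {0..2*pi}"
  using has_integral_holomorphic_cis_power[OF jost_ratio_continuous_on jost_ratio_holomorphic_on, of n]
  by (simp add: jost_ratio_0)

lemma has_integral_jost_ratio_inverse_cis_power:
  "((\<lambda>s. jost_ratio (inverse (cis s)) * inverse (cis s) ^ n) has_integral of_real (2 * pi * a * 0 ^ n)) {0..2*pi}"
proof -
  have "((cnj \<circ> (\<lambda>s. jost_ratio (cis s) * cis s ^ n)) has_integral cnj (of_real (2 * pi * a * 0 ^ n))) {0..2*pi}"
    by (subst has_integral_cnj) (rule has_integral_jost_ratio_cis_power)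
  then show ?thesis
    by (simp add: o_def cis_cnj flip: jost_ratio_cnj)
qed

lemma eigvec_orthonormal:
  "((\<lambda>s. complex_of_real (eigvec k s * eigvec l s * weight s)) has_integral (if k = l then 1 else 0))
     {0..2*pi}"
proof -
  define c where "c n = (if n = 0 then 1 / cb else 1)" for n :: nat
  define E where "E s = of_real (c k * c l) *
    ((jost_ratio (cis s) * cis s ^ (k + l) + jost_ratio (inverse (cis s)) * inverse (cis s) ^ (k + l)
      + cis s ^ k * inverse (cis s) ^ l + cis s ^ l * inverse (cis s) ^ k) / (4 * pi))" for s
  have E_eq: "of_real (eigvec k s * eigvec l s * weight s) = E s" if "s \<in> {0..2*pi} - {0, pi, 2*pi}" for s
    unfolding E_def c_def by (rule eigvec_product_weight[OF sin_neq_0_off_multiples_pi[OF that]])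
  have E_integral: "(E has_integral (if k = l then 1 else 0)) {0..2*pi}"
  proof (rule has_integral_eq_rhs)
    show "(E has_integral (of_real (c k * c l) :: complex) *
        ((of_real (2 * pi * a * 0 ^ (k + l)) + of_real (2 * pi * a * 0 ^ (k + l))
          + of_real (if k = l then 2 * pi else 0) + of_real (if l = k then 2 * pi else 0)) / of_real (4 * pi))) {0..2*pi}"
      unfolding E_def
      by (intro has_integral_mult_right has_integral_divide has_integral_add
          has_integral_jost_ratio_cis_power has_integral_jost_ratio_inverse_cis_power
          has_integral_cis_power_inverse_power)
    show "(if k = l then 1 else 0) = (of_real (c k * c l) :: complex) *
        ((of_real (2 * pi * a * 0 ^ (k + l)) + of_real (2 * pi * a * 0 ^ (k + l))
          + of_real (if k = l then 2 * pi else 0) + of_real (if l = k then 2 * pi else 0)) / of_real (4 * pi))"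
    proof (cases "k + l = 0")
      case True
      then show ?thesis
        using cb_nonzero by (simp add: c_def a_def field_simps power2_eq_square)
    next
      case False
      then show ?thesis
        by (auto simp: c_def)
    qed
  qed
  show ?thesis
    by (rule has_integral_spike_finite[of "{0, pi, 2*pi}", OF _ E_eq E_integral]) simp_all
qed

definition moment :: "nat \<Rightarrow> nat \<Rightarrow> nat \<Rightarrow> complex" where
  "moment j n k = integral {0..2*pi} (\<lambda>s. of_real ((2 * B * cos s)^n * eigvec j s * weight s * eigvec k s))"

lemma jacobiH_power_basis_vec: "(jacobiH B C \<mu> ^^ n) (basis_vec j) k = moment j n k"
proof (induction n arbitrary: k)
  case 0
  show ?case
    using integral_unique[OF eigvec_orthonormal[of j k]]
    by (auto simp: moment_def basis_vec_def mult_ac)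
next
  case (Suc n)
  define f :: "real \<Rightarrow> complex" where "f s = of_real ((2 * B * cos s)^n * eigvec j s * weight s)" for s
  have "(jacobiH B C \<mu> ^^ n) (basis_vec j) =
      (\<lambda>k. integral {0..2*pi} (\<lambda>s. f s * of_real (orthpoly B C \<mu> k (2 * B * cos s))))"
    using Suc.IH by (simp add: fun_eq_iff moment_def f_def eigvec_def)
  then have "(jacobiH B C \<mu> ^^ Suc n) (basis_vec j) k =
      jacobiH B C \<mu> (\<lambda>k. integral {0..2*pi} (\<lambda>s. f s * of_real (orthpoly B C \<mu> k (2 * B * cos s)))) k"
    by simp
  also have "\<dots> = integral {0..2*pi} (\<lambda>s. f s * jacobiH B C \<mu> (\<lambda>k. of_real (orthpoly B C \<mu> k (2 * B * cos s))) k)"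
    unfolding f_def
    by (subst jacobiH_integral)
       (auto intro!: integrable_continuous_interval continuous_intros weight_continuous_on
         eigvec_continuous_on eigvec_continuous_on[unfolded eigvec_def] simp: jacobiH_mult)
  also have "\<dots> = moment j (Suc n) k"
    by (simp add: jacobiH_orthpoly[OF B_nonzero C_nonzero] moment_def f_def eigvec_def mult_ac)
  finally show ?case .
qed

lemma evolved_diagonal_eq:
  "evolved B C \<mu> j t j =
     integral {0..2*pi} (\<lambda>s. exp (- \<i> * of_real (2 * B * t * cos s)) * of_real (eigvec j s^2 * weight s))"
proof -
  define f :: "real \<Rightarrow> complex" where "f s = - \<i> * of_real t * of_real (2 * B * cos s)" for s
  define g :: "real \<Rightarrow> complex" where "g s = of_real (eigvec j s^2 * weight s)" for s
  have f_power: "f s ^ n = (- \<i> * of_real t) ^ n * of_real ((2 * B * cos s) ^ n)" for s n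
    unfolding f_def of_real_power by (rule power_mult_distrib)
  have "(\<lambda>n. integral {0..2*pi} (\<lambda>s. f s ^ n / fact n * g s)) sums integral {0..2*pi} (\<lambda>s. exp (f s) * g s)"
    unfolding f_def g_def
    by (intro sums_integral_exp continuous_intros eigvec_continuous_on weight_continuous_on)
  moreover have "integral {0..2*pi} (\<lambda>s. f s ^ n / fact n * g s) =
      (- \<i> * of_real t) ^ n / of_nat (fact n) * ((jacobiH B C \<mu> ^^ n) (basis_vec j)) j" for n
    unfolding jacobiH_power_basis_vec moment_def integral_mult_right[symmetric]
    by (rule integral_cong) (simp add: f_power g_def power2_eq_square mult_ac divide_inverse)
  moreover have "exp (f s) = exp (- \<i> * of_real (2 * B * t * cos s))" for s
    by (simp add: f_def mult_ac)
  ultimately show ?thesis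
    unfolding evolved_def g_def by (simp add: sums_iff)
qed

lemma evolved_diagonal_tendsto_0: "((\<lambda>t. evolved B C \<mu> j t j) \<longlongrightarrow> 0) at_top"
proof -
  define r where "r s = eigvec j s^2 * cb^2 * sin s / (pi * (cmod (F (cis s)))^2)" for s
  have "continuous_on {0..2*pi} r"
    unfolding r_def F_def using F_cis_nonzero
    by (intro continuous_intros eigvec_continuous_on) (auto simp: F_def)
  then have "((\<lambda>L. integral {0..2*pi} (\<lambda>s. exp (- \<i> * of_real (L * cos s)) * of_real (sin s * r s))) \<longlongrightarrow> 0) at_top"
    by (intro integral_exp_cos_sin_tendsto_0) simp_all
  moreover have "filterlim (\<lambda>t. 2 * B * t) at_top at_top"
    using B_pos by (intro filterlim_tendsto_pos_mult_at_top[OF tendsto_const _ filterlim_ident]) simp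
  ultimately have "((\<lambda>t. integral {0..2*pi} (\<lambda>s. exp (- \<i> * of_real (2 * B * t * cos s)) * of_real (sin s * r s)))
                     \<longlongrightarrow> 0) at_top"
    by (rule filterlim_compose)
  moreover have "eigvec j s^2 * weight s = sin s * r s" for s
    by (simp add: r_def weight_def power2_eq_square)
  ultimately show ?thesis
    by (simp add: evolved_diagonal_eq)
qed

end

lemma l2_inner_basis_vec: "l2_inner (basis_vec j) v = v j"
proof -
  have "(\<lambda>k. cnj (basis_vec j k) * v k) = (\<lambda>k. if k = j then v k else 0)"
    by (simp add: basis_vec_def fun_eq_iff)
  then show ?thesis
    unfolding l2_inner_def using sums_unique[OF sums_single[of j v]] by simp
qed

lemma l2_inner_proj_nj: "l2_inner v (proj_nj j v) = of_real ((cmod (v j))^2)"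
proof -
  have "(\<lambda>k. cnj (v k) * proj_nj j v k) = (\<lambda>k. if k = j then cnj (v k) * v k else 0)"
    unfolding proj_nj_def l2_inner_basis_vec by (simp add: basis_vec_def fun_eq_iff)
  then have "l2_inner v (proj_nj j v) = cnj (v j) * v j"
    unfolding l2_inner_def using sums_unique[OF sums_single[of j "\<lambda>k. cnj (v k) * v k"]] by simp
  then show ?thesis
    unfolding complex_norm_square by (simp add: mult.commute)
qed

theorem theorem1:
  fixes B C \<mu> :: real and j :: nat
  assumes "B > 0"
    and "C \<noteq> B \<Longrightarrow> 2 * \<bar>1 - (C / B)\<^sup>2\<bar> <
           cmod (complex_of_real \<bar>\<mu> / B\<bar>
                 - csqrt (complex_of_real ((\<mu> / B)\<^sup>2 + 4 * (C / B)\<^sup>2 - 4)))"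
    and "C = B \<Longrightarrow> \<bar>\<mu> / B\<bar> < 1"
  shows "((\<lambda>t. l2_inner (evolved B C \<mu> j t) (proj_nj j (evolved B C \<mu> j t)))
            \<longlongrightarrow> 0) at_top
     \<and> ((\<lambda>t. (cmod (l2_inner (basis_vec j) (evolved B C \<mu> j t)))\<^sup>2) \<longlongrightarrow> 0) at_top"
proof -
  interpret jacobi_decay B C \<mu>
    using assms decay_condition_roots_in_disc by unfold_locales blast+
  have "((\<lambda>t. (cmod (evolved B C \<mu> j t j))^2) \<longlongrightarrow> 0) at_top"
    using tendsto_power[OF tendsto_norm_zero[OF evolved_diagonal_tendsto_0[of j]], of 2] by simp
  then show ?thesis
    unfolding l2_inner_proj_nj l2_inner_basis_vec using tendsto_of_real by fastforce
qed

end
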